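(* Let $S=\{x_1,\dots,x_n\}$ be a GCD closed set of positive integers in which every element generates a double-chain set in $S$. Then the inertia of the LCM matrix $[S]$ is $(i_+([S]),i_-([S]),i_0([S]))$ with $i_0([S])=0$, $i_-([S])=|\{x_k\in S: |C_S(x_k)|=1\}|$ and $i_+([S])=n-i_-([S])=|\{x_k\in S: |C_S(x_k)|\ne 1\}|$.
   Context: The inertia of a real symmetric matrix $M$ is the triple $(i_+(M),i_-(M),i_0(M))$ of the numbers of positive, negative and zero eigenvalues (with multiplicity). The LCM matrix $[S]$ has $(i,j)$ entry $\mathrm{lcm}(x_i,x_j)$. All order notions are with respect to divisibility, with meet $\gcd$; $S$ is GCD closed if $\gcd(x,y)\in S$ for all $x,y\in S$. $C_S(x)$ is the set of elements of $S$ covered by $x$ in $(S,\mid)$; $\mathrm{meetcl}(C)$ is the set of gcds of all nonempty finite subsets of $C$. An element $x\in S$ generates a double-chain set in $S$ if $\mathrm{meetcl}(C_S(x))\setminus C_S(x)$ is a union of two disjoint (possibly empty) chains under divisibility. *)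

theory Defs
  imports "Jordan_Normal_Form.Char_Poly"
begin

definition covered_by :: "nat set \<Rightarrow> nat \<Rightarrow> nat set" where
  "covered_by S x = {y \<in> S. y dvd x \<and> y \<noteq> x \<and>
       \<not> (\<exists>z\<in>S. y dvd z \<and> z dvd x \<and> z \<noteq> y \<and> z \<noteq> x)}"

definition meetcl :: "nat set \<Rightarrow> nat set" where
  "meetcl C = {Gcd T | T. T \<subseteq> C \<and> T \<noteq> {} \<and> finite T}"

definition gcd_closed :: "nat set \<Rightarrow> bool" where
  "gcd_closed S \<longleftrightarrow> (\<forall>x\<in>S. \<forall>y\<in>S. gcd x y \<in> S)"

definition dvd_chain :: "nat set \<Rightarrow> bool" where
  "dvd_chain A \<longleftrightarrow> (\<forall>a\<in>A. \<forall>b\<in>A. a dvd b \<or> b dvd a)"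

definition generates_double_chain :: "nat set \<Rightarrow> nat \<Rightarrow> bool" where
  "generates_double_chain S x \<longleftrightarrow>
     (\<exists>A B. A \<inter> B = {} \<and> dvd_chain A \<and> dvd_chain B \<and>
            meetcl (covered_by S x) - covered_by S x = A \<union> B)"

definition lcm_matrix :: "nat list \<Rightarrow> real mat" where
  "lcm_matrix xs = mat (length xs) (length xs) (\<lambda>(i,j). real (lcm (xs ! i) (xs ! j)))"

(* numbers of positive / negative / zero eigenvalues, counted with (algebraic) multiplicity,
   i.e. as roots of the characteristic polynomial *)
definition pos_inertia :: "real mat \<Rightarrow> nat" where
  "pos_inertia A = (\<Sum>a\<in>{a. poly (char_poly A) a = 0 \<and> a > 0}. order a (char_poly A))"

definition neg_inertia :: "real mat \<Rightarrow> nat" where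
  "neg_inertia A = (\<Sum>a\<in>{a. poly (char_poly A) a = 0 \<and> a < 0}. order a (char_poly A))"

definition zero_inertia :: "real mat \<Rightarrow> nat" where
  "zero_inertia A = order 0 (char_poly A)"

definition inertia :: "real mat \<Rightarrow> nat \<times> nat \<times> nat" where
  "inertia A = (pos_inertia A, neg_inertia A, zero_inertia A)"

end

theory Submission
  imports Defs "Jordan_Normal_Form.Schur_Decomposition"
    "HOL-Computational_Algebra.Fundamental_Theorem_Algebra"
begin

text \<open>By the Bourque--Ligh factorization \<open>[S] = E \<Delta> E\<^sup>T\<close>, with \<open>E\<close> invertible and
  \<open>\<Delta> = diag(\<Psi>(x\<^sub>k))\<close> where \<open>\<Sum>\<^bsub>y \<in> S, y | x\<^esub> \<Psi>(y) = 1/x\<close>, Sylvester's law of inertia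
  reduces the theorem to the signs of the \<open>\<Psi>(x)\<close>. With \<open>C\<close> the set of elements covered by
  \<open>x\<close>, \<open>\<Psi>(x) = 1/x - \<Sigma>(C)\<close>, where \<open>\<Sigma>(C)\<close> sums \<open>\<Psi>\<close> over the elements of \<open>S\<close> below \<open>C\<close>.
  If \<open>|C| = 1\<close> this is \<open>1/x - 1/c < 0\<close>. If \<open>|C| \<ge> 2\<close>, the double-chain hypothesis provides
  \<open>c \<in> C\<close> whose gcds with the other elements of \<open>C\<close> form a chain with top \<open>h\<close>, a proper
  divisor of \<open>c\<close>; by inclusion--exclusion \<open>\<Sigma>(C) = \<Sigma>(C - {c}) + 1/c - 1/h\<close>, and induction
  gives \<open>\<Sigma>(C) \<le> 0\<close>, hence \<open>\<Psi>(x) > 0\<close>.\<close>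

section \<open>Inertia of a matrix whose characteristic polynomial splits\<close>

lemma order_prod_linear_factors:
  fixes d :: "nat \<Rightarrow> 'a :: idom"
  shows "Polynomial.order a (\<Prod>b\<leftarrow>map d [0..<n]. [:- b, 1:]) = card {i. i < n \<and> d i = a}"
proof (induction n)
  case 0
  then show ?case by simp
next
  case (Suc n)
  let ?p = "\<Prod>b\<leftarrow>map d [0..<n]. [:- b, 1:]"
  have "?p \<noteq> 0" "[:- d n, 1:] \<noteq> 0"
    by auto
  then have "Polynomial.order a (?p * [:- d n, 1:]) = Polynomial.order a ?p + Polynomial.order a [:- d n, 1:]"
    by (metis mult_eq_0_iff order_mult)
  also have "\<dots> = card {i. i < n \<and> d i = a} + (if d n = a then 1 else 0)"
    using Suc by (simp add: order_linear')
  also have "\<dots> = card {i. i < Suc n \<and> d i = a}"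
  proof -
    have "{i. i < Suc n \<and> d i = a} = {i. i < n \<and> d i = a} \<union> (if d n = a then {n} else {})"
      by (auto simp: less_Suc_eq)
    then show ?thesis by auto
  qed
  finally show ?case by simp
qed

lemma inertia_of_split_char_poly:
  fixes A :: "real mat" and d :: "nat \<Rightarrow> real"
  assumes cp: "char_poly A = (\<Prod>b\<leftarrow>map d [0..<n]. [:- b, 1:])"
  shows "pos_inertia A = card {i. i < n \<and> d i > 0}"
    and "neg_inertia A = card {i. i < n \<and> d i < 0}"
    and "zero_inertia A = card {i. i < n \<and> d i = 0}"
proof -
  let ?p = "char_poly A"
  have order: "Polynomial.order a ?p = card {i. i < n \<and> d i = a}" for a
    unfolding cp by (rule order_prod_linear_factors)
  have root: "poly ?p a = 0 \<longleftrightarrow> (\<exists>i<n. d i = a)" for a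
  proof -
    have "?p \<noteq> 0" unfolding cp by auto
    then have "poly ?p a = 0 \<longleftrightarrow> card {i. i < n \<and> d i = a} \<noteq> 0"
      using order_root order by metis
    then show ?thesis by auto
  qed
  have count: "(\<Sum>a\<in>{a. poly ?p a = 0 \<and> P a}. Polynomial.order a ?p) = card {i. i < n \<and> P (d i)}" for P
  proof -
    have "card {i. i < n \<and> P (d i)} =
        (\<Sum>a\<in>d ` {i. i < n \<and> P (d i)}. card {i \<in> {i. i < n \<and> P (d i)}. d i = a})"
      unfolding card_eq_sum by (rule sum.image_gen) auto
    also have "\<dots> = (\<Sum>a\<in>d ` {i. i < n \<and> P (d i)}. Polynomial.order a ?p)"
      by (rule sum.cong) (auto simp: order intro!: arg_cong[where f = card])
    also have "d ` {i. i < n \<and> P (d i)} = {a. poly ?p a = 0 \<and> P a}"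
      using root by auto
    finally show ?thesis ..
  qed
  show "pos_inertia A = card {i. i < n \<and> d i > 0}"
    unfolding pos_inertia_def using count[of "\<lambda>a. a > 0"] by simp
  show "neg_inertia A = card {i. i < n \<and> d i < 0}"
    unfolding neg_inertia_def using count[of "\<lambda>a. a < 0"] by simp
  show "zero_inertia A = card {i. i < n \<and> d i = 0}"
    unfolding zero_inertia_def by (rule order)
qed

lemma char_poly_mat_diag:
  "char_poly (mat_diag n d) = (\<Prod>b\<leftarrow>map d [0..<n]. [:- b, 1:])"
proof -
  have "upper_triangular (mat_diag n d)"
    unfolding upper_triangular_def mat_diag_def by simp
  moreover have "diag_mat (mat_diag n d) = map d [0..<n]"
    unfolding diag_mat_def mat_diag_def by simp
  ultimately show ?thesis
    using char_poly_upper_triangular[of "mat_diag n d" n] by simp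
qed

section \<open>Spectral theorem for real symmetric matrices\<close>

lemma real_symmetric_form_self_conjugate:
  fixes A :: "real mat" and v :: "complex vec"
  assumes A: "A \<in> carrier_mat n n" and sym: "transpose_mat A = A"
  defines "s \<equiv> \<Sum>i<n. \<Sum>j<n. cnj (v $ i) * complex_of_real (A $$ (i,j)) * v $ j"
  shows "cnj s = s"
proof -
  have "cnj s = (\<Sum>i<n. \<Sum>j<n. v $ i * complex_of_real (A $$ (i,j)) * cnj (v $ j))"
    unfolding s_def by simp
  also have "\<dots> = (\<Sum>j<n. \<Sum>i<n. v $ i * complex_of_real (A $$ (i,j)) * cnj (v $ j))"
    by (rule sum.swap)
  also have "\<dots> = s" unfolding s_def
  proof (intro sum.cong refl)
    fix i j assume "i \<in> {..<n}" "j \<in> {..<n}"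
    then have "A $$ (j,i) = A $$ (i,j)" using sym A
      by (metis carrier_matD index_transpose_mat(1) lessThan_iff)
    then show "v $ j * complex_of_real (A $$ (j, i)) * cnj (v $ i) =
               cnj (v $ i) * complex_of_real (A $$ (i, j)) * v $ j"
      by (simp add: algebra_simps)
  qed
  finally show ?thesis .
qed

text \<open>For an eigenpair \<open>(z, v)\<close> the form \<open>v\<^sup>* A v = z \<parallel>v\<parallel>\<^sup>2\<close> is real, so \<open>z\<close> is real.\<close>

lemma real_symmetric_eigenvalue_real:
  fixes A :: "real mat"
  assumes A: "A \<in> carrier_mat n n" and sym: "transpose_mat A = A"
    and v: "v \<in> carrier_vec n" "v \<noteq> 0\<^sub>v n" and eig: "map_mat complex_of_real A *\<^sub>v v = z \<cdot>\<^sub>v v"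
  shows "Im z = 0"
proof -
  define s where "s = (\<Sum>i<n. \<Sum>j<n. cnj (v $ i) * complex_of_real (A $$ (i,j)) * v $ j)"
  define N where "N = (\<Sum>i<n. (cmod (v $ i))\<^sup>2)"
  have row: "(\<Sum>j<n. complex_of_real (A $$ (i,j)) * v $ j) = z * v $ i" if i: "i < n" for i
  proof -
    have "(map_mat complex_of_real A *\<^sub>v v) $ i = (\<Sum>j<n. complex_of_real (A $$ (i,j)) * v $ j)"
      using i v(1) A by (simp add: mult_mat_vec_def scalar_prod_def row_def lessThan_atLeast0)
    with eig i v(1) show ?thesis by simp
  qed
  have "s = (\<Sum>i<n. cnj (v $ i) * (\<Sum>j<n. complex_of_real (A $$ (i,j)) * v $ j))"
    unfolding s_def by (simp add: sum_distrib_left mult.assoc)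
  also have "\<dots> = (\<Sum>i<n. z * (cnj (v $ i) * v $ i))"
    by (rule sum.cong) (simp_all add: row)
  also have "\<dots> = z * complex_of_real N"
    unfolding N_def of_real_sum sum_distrib_left
    by (rule sum.cong) (simp_all add: complex_eq_iff cmod_def power2_eq_square)
  finally have s: "s = z * complex_of_real N" .
  have "cnj s = s" unfolding s_def by (rule real_symmetric_form_self_conjugate[OF A sym])
  then have "Im s = 0" by (metis Reals_cnj_iff complex_is_Real_iff)
  moreover have "N > 0"
  proof -
    from v obtain k where k: "k < n" "v $ k \<noteq> 0"
      by (metis carrier_vecD eq_vecI index_zero_vec(1) index_zero_vec(2))
    then have "(cmod (v $ k))\<^sup>2 \<le> N" unfolding N_def by (intro member_le_sum) auto
    moreover have "(cmod (v $ k))\<^sup>2 > 0" using k by simp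
    ultimately show ?thesis by linarith
  qed
  ultimately show "Im z = 0" unfolding s by simp
qed

lemma real_symmetric_has_eigenvector:
  fixes A :: "real mat"
  assumes A: "A \<in> carrier_mat n n" and sym: "transpose_mat A = A" and n: "n > 0"
  shows "\<exists>e v. v \<in> carrier_vec n \<and> v \<noteq> 0\<^sub>v n \<and> A *\<^sub>v v = e \<cdot>\<^sub>v v"
proof -
  define Ac where "Ac = map_mat complex_of_real A"
  have Ac: "Ac \<in> carrier_mat n n" using A unfolding Ac_def by simp
  have cp: "char_poly Ac = map_poly complex_of_real (char_poly A)"
    unfolding Ac_def by (rule of_real_hom.char_poly_hom[OF A])
  have "degree (char_poly Ac) = n" using degree_monic_char_poly[OF Ac] by simp
  then have "\<not> constant (poly (char_poly Ac))" using n by (simp add: constant_degree)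
  then obtain z where z: "poly (char_poly Ac) z = 0" using fundamental_theorem_of_algebra by blast
  then have "eigenvalue Ac z" using eigenvalue_root_char_poly[OF Ac] by simp
  then obtain v where "v \<in> carrier_vec n" "v \<noteq> 0\<^sub>v n" "Ac *\<^sub>v v = z \<cdot>\<^sub>v v"
    unfolding eigenvalue_def eigenvector_def using Ac by auto
  then have "Im z = 0" unfolding Ac_def by (rule real_symmetric_eigenvalue_real[OF A sym])
  then have "z = complex_of_real (Re z)" by (simp add: complex_eq_iff)
  with z cp have "poly (char_poly A) (Re z) = 0"
    by (metis of_real_eq_0_iff of_real_hom.poly_map_poly)
  then have "eigenvalue A (Re z)" using eigenvalue_root_char_poly[OF A] by simp
  then show ?thesis unfolding eigenvalue_def eigenvector_def using A by auto
qed

lemma normalized_corthogonal_columns: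
  fixes ws :: "real vec list"
  assumes ws: "corthogonal ws" "set ws \<subseteq> carrier_vec n" "length ws = n" and n: "n > 0"
  shows "\<exists>U. U \<in> carrier_mat n n \<and> transpose_mat U * U = 1\<^sub>m n \<and>
             col U 0 = (1 / sqrt (ws ! 0 \<bullet> ws ! 0)) \<cdot>\<^sub>v ws ! 0"
proof -
  have wsn: "ws ! i \<in> carrier_vec n" if "i < n" for i using ws that by auto
  have ws_orth: "ws ! i \<bullet> ws ! j = 0 \<longleftrightarrow> i \<noteq> j" if "i < n" "j < n" for i j
    using corthogonalD[OF ws(1)] that ws(3) by simp
  have ws_pos: "ws ! i \<bullet> ws ! i > 0" if "i < n" for i
  proof -
    have "ws ! i \<bullet> ws ! i \<ge> 0" unfolding scalar_prod_def by (rule sum_nonneg) simp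
    with ws_orth[OF that that] show ?thesis by simp
  qed
  define us where "us = map (\<lambda>w. (1 / sqrt (w \<bullet> w)) \<cdot>\<^sub>v w) ws"
  have us_len: "length us = n" unfolding us_def using ws by simp
  have usn: "us ! i \<in> carrier_vec n" if "i < n" for i
    using wsn[OF that] that ws(3) unfolding us_def by simp
  have us_dot: "us ! i \<bullet> us ! j = (if i = j then 1 else 0)" if ij: "i < n" "j < n" for i j
  proof -
    have "us ! i \<bullet> us ! j =
        (1 / sqrt (ws ! i \<bullet> ws ! i)) * (1 / sqrt (ws ! j \<bullet> ws ! j)) * (ws ! i \<bullet> ws ! j)"
      unfolding us_def using ij ws(3) wsn[OF ij(1)] wsn[OF ij(2)] by simp
    also have "\<dots> = (if i = j then 1 else 0)"
    proof (cases "i = j")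
      case True
      with ws_pos[OF ij(1)] show ?thesis by (simp add: real_sqrt_mult[symmetric])
    next
      case False
      with ws_orth[OF ij] show ?thesis by simp
    qed
    finally show ?thesis .
  qed
  define U where "U = mat_of_cols n us"
  have U: "U \<in> carrier_mat n n" unfolding U_def using us_len by (metis mat_of_cols_carrier(1))
  have colU: "col U i = us ! i" if "i < n" for i unfolding U_def using that us_len usn by simp
  have "transpose_mat U * U = 1\<^sub>m n"
    by (rule eq_matI) (use U in \<open>auto simp: colU us_dot\<close>)
  moreover have "col U 0 = (1 / sqrt (ws ! 0 \<bullet> ws ! 0)) \<cdot>\<^sub>v ws ! 0"
    using colU[OF n] unfolding us_def using n ws(3) by simp
  ultimately show ?thesis using U by blast
qed

lemma orthonormal_basis_extension:
  fixes v :: "real vec"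
  assumes v: "v \<in> carrier_vec n" and v0: "v \<noteq> 0\<^sub>v n"
  shows "\<exists>U c. U \<in> carrier_mat n n \<and> transpose_mat U * U = 1\<^sub>m n \<and> col U 0 = c \<cdot>\<^sub>v v"
proof -
  have n: "n > 0"
  proof (rule ccontr)
    assume "\<not> n > 0"
    then have "v = 0\<^sub>v n" using v by (intro eq_vecI) auto
    with v0 show False ..
  qed
  define b where "b = basis_completion v"
  have b: "set b \<subseteq> carrier_vec n" "distinct b"
    "\<not> module.lin_dep class_ring (module_vec TYPE(real) n) (set b)" "length b = n" "hd b = v"
    using vec_space.basis_completion[OF v v0] unfolding b_def by auto
  define ws where "ws = gram_schmidt n b"
  have ws: "corthogonal ws" "set ws \<subseteq> carrier_vec n" "length ws = n"
    using cof_vec_space.gram_schmidt_result[OF b(1,2,3) ws_def] b(4) by auto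
  from b(4,5) n obtain vs where "b = v # vs" by (cases b) auto
  then have "hd ws = v" unfolding ws_def using cof_vec_space.gram_schmidt_hd[OF v] by simp
  then have "ws ! 0 = v" using n ws(3) by (metis hd_conv_nth list.size(3) not_less0)
  then show ?thesis using normalized_corthogonal_columns[OF ws n] by metis
qed

lemma transpose_congruence_symmetric:
  fixes A U :: "'a :: comm_ring_1 mat"
  assumes A: "A \<in> carrier_mat n n" and sym: "transpose_mat A = A" and U: "U \<in> carrier_mat n k"
  shows "transpose_mat (transpose_mat U * A * U) = transpose_mat U * A * U"
proof -
  have "transpose_mat (transpose_mat U * A * U) = transpose_mat U * transpose_mat (transpose_mat U * A)"
    using A U by (intro transpose_mult) auto
  also have "transpose_mat (transpose_mat U * A) = A * U"
    using A U sym by (subst transpose_mult) auto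
  finally show ?thesis
    using A U by (simp add: assoc_mult_mat[of _ k n _ n _ k])
qed

lemma transpose_mat_diag [simp]: "transpose_mat (mat_diag n d) = mat_diag n d"
  by (rule eq_matI) (auto simp: mat_diag_def)

lemma mat_diag_Suc:
  "mat_diag (Suc m) d =
     four_block_mat (mat 1 1 (\<lambda>_. d 0)) (0\<^sub>m 1 m) (0\<^sub>m m 1) (mat_diag m (\<lambda>i. d (Suc i)))"
  by (rule eq_matI) (auto simp: mat_diag_def)

lemma eigenvector_column_block_decomposition:
  fixes A U :: "real mat"
  assumes A: "A \<in> carrier_mat (Suc m) (Suc m)" and sym: "transpose_mat A = A"
    and U: "U \<in> carrier_mat (Suc m) (Suc m)" and orth: "transpose_mat U * U = 1\<^sub>m (Suc m)"
    and eig: "A *\<^sub>v col U 0 = e \<cdot>\<^sub>v col U 0"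
  shows "\<exists>B. B \<in> carrier_mat m m \<and> transpose_mat B = B \<and>
           transpose_mat U * A * U = four_block_mat (mat 1 1 (\<lambda>_. e)) (0\<^sub>m 1 m) (0\<^sub>m m 1) B"
proof -
  define M where "M = transpose_mat U * A * U"
  have M: "M \<in> carrier_mat (Suc m) (Suc m)" unfolding M_def using A U by simp
  have Msym: "transpose_mat M = M"
    unfolding M_def by (rule transpose_congruence_symmetric[OF A sym U])
  have col0: "M $$ (i, 0) = (if i = 0 then e else 0)" if i: "i < Suc m" for i
  proof -
    have "M = transpose_mat U * (A * U)"
      unfolding M_def using A U by (simp add: assoc_mult_mat[of _ "Suc m" "Suc m"])
    moreover have "col (A * U) 0 = A *\<^sub>v col U 0" by (rule col_mult2[OF A U]) simp
    ultimately have "M $$ (i, 0) = col U i \<bullet> (e \<cdot>\<^sub>v col U 0)"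
      using i A U eig by simp
    also have "\<dots> = e * (transpose_mat U * U) $$ (i, 0)" using i U by simp
    finally show ?thesis unfolding orth using i by simp
  qed
  have row0: "M $$ (0, j) = (if j = 0 then e else 0)" if j: "j < Suc m" for j
  proof -
    have "M $$ (0, j) = transpose_mat M $$ (j, 0)" using M j by simp
    with Msym col0[OF j] show ?thesis by simp
  qed
  define B where "B = mat m m (\<lambda>(i,j). M $$ (Suc i, Suc j))"
  have "transpose_mat B = B"
  proof (rule eq_matI)
    fix i j assume "i < dim_row B" "j < dim_col B"
    then have ij: "i < m" "j < m" unfolding B_def by auto
    then have "M $$ (Suc j, Suc i) = transpose_mat M $$ (Suc i, Suc j)" using M by simp
    with ij Msym show "transpose_mat B $$ (i, j) = B $$ (i, j)" by (simp add: B_def)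
  qed (auto simp: B_def)
  moreover have "M = four_block_mat (mat 1 1 (\<lambda>_. e)) (0\<^sub>m 1 m) (0\<^sub>m m 1) B"
  proof (rule eq_matI)
    fix i j assume "i < dim_row (four_block_mat (mat 1 1 (\<lambda>_. e)) (0\<^sub>m 1 m) (0\<^sub>m m 1) B)"
      "j < dim_col (four_block_mat (mat 1 1 (\<lambda>_. e)) (0\<^sub>m 1 m) (0\<^sub>m m 1) B)"
    then have "i < Suc m" "j < Suc m" by (auto simp: B_def)
    then show "M $$ (i, j) = four_block_mat (mat 1 1 (\<lambda>_. e)) (0\<^sub>m 1 m) (0\<^sub>m m 1) B $$ (i, j)"
      using col0 row0 by (cases i; cases j) (auto simp: B_def)
  qed (use M in \<open>auto simp: B_def\<close>)
  moreover have "B \<in> carrier_mat m m" unfolding B_def by simp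
  ultimately show ?thesis unfolding M_def by blast
qed

lemma congruence_mult:
  fixes A P Q :: "'a :: comm_ring_1 mat"
  assumes "A \<in> carrier_mat n n" "P \<in> carrier_mat n n" "Q \<in> carrier_mat n n"
  shows "transpose_mat (P * Q) * A * (P * Q) = transpose_mat Q * (transpose_mat P * A * P) * Q"
  using assms by (simp add: transpose_mult[of P n n Q n] assoc_mult_mat[of _ n n _ n _ n])

lemma block_congruence:
  fixes e :: "'a :: comm_ring_1" and B U :: "'a mat"
  assumes "B \<in> carrier_mat m m" "U \<in> carrier_mat m m"
  defines "F \<equiv> four_block_mat (1\<^sub>m 1) (0\<^sub>m 1 m) (0\<^sub>m m 1) U"
  shows "transpose_mat F * four_block_mat (mat 1 1 (\<lambda>_. e)) (0\<^sub>m 1 m) (0\<^sub>m m 1) B * F =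
         four_block_mat (mat 1 1 (\<lambda>_. e)) (0\<^sub>m 1 m) (0\<^sub>m m 1) (transpose_mat U * B * U)"
proof -
  have "transpose_mat F = four_block_mat (1\<^sub>m 1) (0\<^sub>m 1 m) (0\<^sub>m m 1) (transpose_mat U)"
    unfolding F_def using assms by (simp add: transpose_four_block_mat[of _ 1 1 _ m _ m])
  then show ?thesis
    unfolding F_def using assms by (simp add: mult_four_block_mat[of _ 1 1 _ m _ m _ _ 1 _ m])
qed

lemma orthogonal_mult_block:
  fixes U V :: "'a :: comm_ring_1 mat"
  assumes U: "U \<in> carrier_mat (Suc m) (Suc m)" "transpose_mat U * U = 1\<^sub>m (Suc m)"
    and V: "V \<in> carrier_mat m m" "transpose_mat V * V = 1\<^sub>m m"
  defines "F \<equiv> four_block_mat (1\<^sub>m 1) (0\<^sub>m 1 m) (0\<^sub>m m 1) V"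
  shows "transpose_mat (U * F) * (U * F) = 1\<^sub>m (Suc m)"
proof -
  have F: "F \<in> carrier_mat (Suc m) (Suc m)" unfolding F_def using V by auto
  have one: "1\<^sub>m (Suc k) = four_block_mat (mat 1 1 (\<lambda>_. 1)) (0\<^sub>m 1 k) (0\<^sub>m k 1) (1\<^sub>m k)" for k
    using mat_diag_Suc[of k "\<lambda>_. 1"] by simp
  have "transpose_mat (U * F) * (U * F) = transpose_mat (U * F) * 1\<^sub>m (Suc m) * (U * F)"
    using U F by simp
  also have "\<dots> = transpose_mat F * (transpose_mat U * 1\<^sub>m (Suc m) * U) * F"
    by (rule congruence_mult[OF one_carrier_mat U(1) F])
  also have "transpose_mat U * 1\<^sub>m (Suc m) * U = 1\<^sub>m (Suc m)"
    using U by simp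
  also have "transpose_mat F * 1\<^sub>m (Suc m) * F =
      four_block_mat (mat 1 1 (\<lambda>_. 1)) (0\<^sub>m 1 m) (0\<^sub>m m 1) (transpose_mat V * 1\<^sub>m m * V)"
    unfolding one F_def by (rule block_congruence[OF one_carrier_mat V(1)])
  also have "\<dots> = 1\<^sub>m (Suc m)"
    using V by (simp add: one)
  finally show ?thesis .
qed

theorem real_symmetric_orthogonal_diagonalization:
  fixes A :: "real mat"
  assumes "A \<in> carrier_mat n n" and "transpose_mat A = A"
  shows "\<exists>U d. U \<in> carrier_mat n n \<and> transpose_mat U * U = 1\<^sub>m n \<and>
               transpose_mat U * A * U = mat_diag n d"
  using assms
proof (induction n arbitrary: A)
  case 0
  then show ?case
    by (intro exI[of _ "1\<^sub>m 0"] exI[of _ "\<lambda>_. 0"]) (auto simp: mat_diag_def)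
next
  case (Suc m)
  note A = Suc.prems(1) and sym = Suc.prems(2)
  obtain e v where v: "v \<in> carrier_vec (Suc m)" "v \<noteq> 0\<^sub>v (Suc m)" "A *\<^sub>v v = e \<cdot>\<^sub>v v"
    using real_symmetric_has_eigenvector[OF A sym] by auto
  obtain U0 c where U0: "U0 \<in> carrier_mat (Suc m) (Suc m)" "transpose_mat U0 * U0 = 1\<^sub>m (Suc m)"
    and col: "col U0 0 = c \<cdot>\<^sub>v v"
    using orthonormal_basis_extension[OF v(1,2)] by blast
  have "A *\<^sub>v col U0 0 = e \<cdot>\<^sub>v col U0 0"
    unfolding col using v A by (simp add: mult_mat_vec smult_smult_assoc mult.commute)
  then obtain B where B: "B \<in> carrier_mat m m" "transpose_mat B = B"
    and block: "transpose_mat U0 * A * U0 = four_block_mat (mat 1 1 (\<lambda>_. e)) (0\<^sub>m 1 m) (0\<^sub>m m 1) B"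
    using eigenvector_column_block_decomposition[OF A sym U0] by blast
  obtain U' d' where U': "U' \<in> carrier_mat m m" "transpose_mat U' * U' = 1\<^sub>m m"
    "transpose_mat U' * B * U' = mat_diag m d'"
    using Suc.IH[OF B] by blast
  define F where "F = four_block_mat (1\<^sub>m 1) (0\<^sub>m 1 m) (0\<^sub>m m 1) U'"
  have F: "F \<in> carrier_mat (Suc m) (Suc m)" unfolding F_def using U' by auto
  define d where "d i = (if i = 0 then e else d' (i - 1))" for i
  have "transpose_mat (U0 * F) * (U0 * F) = 1\<^sub>m (Suc m)"
    unfolding F_def by (rule orthogonal_mult_block[OF U0 U'(1,2)])
  moreover have "transpose_mat (U0 * F) * A * (U0 * F) = mat_diag (Suc m) d"
  proof -
    have "transpose_mat (U0 * F) * A * (U0 * F) = transpose_mat F * (transpose_mat U0 * A * U0) * F"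
      by (rule congruence_mult[OF A U0(1) F])
    also have "\<dots> = transpose_mat F * four_block_mat (mat 1 1 (\<lambda>_. e)) (0\<^sub>m 1 m) (0\<^sub>m m 1) B * F"
      unfolding block ..
    also have "\<dots> = four_block_mat (mat 1 1 (\<lambda>_. e)) (0\<^sub>m 1 m) (0\<^sub>m m 1) (mat_diag m d')"
      unfolding F_def block_congruence[OF B(1) U'(1)] U'(3) ..
    also have "\<dots> = mat_diag (Suc m) d"
      unfolding mat_diag_Suc by (simp add: d_def)
    finally show ?thesis .
  qed
  moreover have "U0 * F \<in> carrier_mat (Suc m) (Suc m)" using U0 F by simp
  ultimately show ?case by blast
qed

section \<open>Sylvester's law of inertia\<close>

lemma orthogonal_system_nontrivial_solution:
  fixes W :: "'a :: field vec set"
  assumes W: "finite W" "W \<subseteq> carrier_vec n" and card: "card W < n"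
  shows "\<exists>y \<in> carrier_vec n. y \<noteq> 0\<^sub>v n \<and> (\<forall>w \<in> W. w \<bullet> y = 0)"
proof -
  obtain ws where ws: "set ws = W" "distinct ws" using finite_distinct_list[OF W(1)] by blast
  have len: "length ws < n" using card ws distinct_card by metis
  define N where "N = mat\<^sub>r n n (\<lambda>i. if i = n - 1 then 0\<^sub>v n else if i < length ws then ws ! i else 0\<^sub>v n)"
  have N: "N \<in> carrier_mat n n" unfolding N_def by simp
  have "det N = 0"
    unfolding N_def using len W ws by (intro det_row_0) (auto dest!: nth_mem)
  then obtain y where y: "y \<in> carrier_vec n" "y \<noteq> 0\<^sub>v n" "N *\<^sub>v y = 0\<^sub>v n"
    using det_0_iff_vec_prod_zero[OF N] by auto
  have "ws ! i \<bullet> y = 0" if i: "i < length ws" for i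
  proof -
    have "ws ! i \<in> carrier_vec n" using i W ws by auto
    moreover have "i < n" "i \<noteq> n - 1" using i len by auto
    ultimately have "row N i = ws ! i" unfolding N_def using i by simp
    then have "(N *\<^sub>v y) $ i = ws ! i \<bullet> y" using i len N by simp
    with y(3) i len show ?thesis by simp
  qed
  then show ?thesis using y(1,2) ws(1) by (metis in_set_conv_nth)
qed

lemma mat_diag_mult_vec_index:
  assumes "y \<in> carrier_vec n" "i < n"
  shows "(mat_diag n d *\<^sub>v y) $ i = d i * y $ i"
proof -
  have "(mat_diag n d *\<^sub>v y) $ i = (\<Sum>k\<in>{0..<n}. (if i = k then d k else 0) * y $ k)"
    using assms by (simp add: mat_diag_def scalar_prod_def)
  also have "\<dots> = (\<Sum>k\<in>{0..<n}. (if i = k then d i * y $ k else 0))"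
    by (rule sum.cong) auto
  also have "\<dots> = d i * y $ i" using assms(2) by simp
  finally show ?thesis .
qed

lemma quadratic_form_congruent_diag:
  fixes M :: "'a :: comm_ring_1 mat"
  assumes M: "M \<in> carrier_mat n n" and x: "x \<in> carrier_vec n"
  shows "x \<bullet> ((M * mat_diag n d * transpose_mat M) *\<^sub>v x) =
         (\<Sum>i<n. d i * ((transpose_mat M *\<^sub>v x) $ i)^2)"
proof -
  define y where "y = transpose_mat M *\<^sub>v x"
  have y: "y \<in> carrier_vec n" unfolding y_def using M x by simp
  have "x \<bullet> ((M * mat_diag n d * transpose_mat M) *\<^sub>v x) = x \<bullet> (M *\<^sub>v (mat_diag n d *\<^sub>v y))"
    unfolding y_def using M x by (simp add: assoc_mult_mat_vec[of _ n n _ n])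
  also have "\<dots> = y \<bullet> (mat_diag n d *\<^sub>v y)"
  proof -
    have "mat_diag n d *\<^sub>v y \<in> carrier_vec n" by (rule mult_mat_vec_carrier[OF mat_diag_dim y])
    from transpose_vec_mult_scalar[OF M this x] show ?thesis unfolding y_def ..
  qed
  also have "\<dots> = (\<Sum>i\<in>{0..<n}. y $ i * (mat_diag n d *\<^sub>v y) $ i)"
    unfolding scalar_prod_def by (simp add: carrier_matD[OF mat_diag_dim])
  also have "\<dots> = (\<Sum>i<n. d i * (y $ i)^2)"
    unfolding lessThan_atLeast0 by (rule sum.cong)
      (simp_all del: index_mult_mat_vec add: mat_diag_mult_vec_index[OF y] power2_eq_square)
  finally show ?thesis unfolding y_def .
qed

lemma exists_vector_with_vanishing_coordinates:
  fixes P Q :: "'a :: field mat"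
  assumes P: "P \<in> carrier_mat n n" and Q: "Q \<in> carrier_mat n n"
    and IJ: "I \<subseteq> {0..<n}" "J \<subseteq> {0..<n}" and card: "card J < card I"
  shows "\<exists>x \<in> carrier_vec n. x \<noteq> 0\<^sub>v n \<and>
           (\<forall>i \<in> {0..<n} - I. (transpose_mat Q *\<^sub>v x) $ i = 0) \<and>
           (\<forall>j \<in> J. (transpose_mat P *\<^sub>v x) $ j = 0)"
proof -
  define W where "W = col Q ` ({0..<n} - I) \<union> col P ` J"
  have "card W \<le> card ({0..<n} - I) + card J"
    unfolding W_def by (rule order.trans[OF card_Un_le add_mono[OF card_image_le card_image_le]])
      (use IJ in \<open>auto intro: finite_subset\<close>)
  also have "\<dots> < n"
    using IJ card card_mono[of "{0..<n}" I] by (simp add: card_Diff_subset finite_subset)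
  finally have "card W < n" .
  moreover have "finite W" "W \<subseteq> carrier_vec n"
    unfolding W_def using P Q IJ by (auto simp del: col_carrier_vec intro: col_carrier_vec finite_subset)
  ultimately obtain x where x: "x \<in> carrier_vec n" "x \<noteq> 0\<^sub>v n" and xW: "\<forall>w \<in> W. w \<bullet> x = 0"
    using orthogonal_system_nontrivial_solution by blast
  moreover have "\<forall>i \<in> {0..<n} - I. (transpose_mat Q *\<^sub>v x) $ i = 0"
    using xW Q x unfolding W_def by auto
  moreover have "\<forall>j \<in> J. (transpose_mat P *\<^sub>v x) $ j = 0"
    using xW P x IJ unfolding W_def by auto
  ultimately show ?thesis by blast
qed

text \<open>The core of Sylvester's law: on the span of the basis vectors of \<open>Q\<^sup>T\<close> where \<open>s \<cdot> d\<close>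
  is positive the form is \<open>s\<close>-definite, so that span meets the span of the basis vectors of
  \<open>P\<^sup>T\<close> where \<open>s \<cdot> l \<le> 0\<close> only in \<open>0\<close>.\<close>

lemma congruent_diag_sign_count_le:
  fixes P Q :: "real mat" and s :: real
  assumes P: "P \<in> carrier_mat n n" and Q: "Q \<in> carrier_mat n n" and detQ: "det Q \<noteq> 0"
    and congr: "P * mat_diag n l * transpose_mat P = Q * mat_diag n d * transpose_mat Q"
  shows "card {i. i < n \<and> s * d i > 0} \<le> card {i. i < n \<and> s * l i > 0}"
proof (rule ccontr)
  define I where "I = {i. i < n \<and> s * d i > 0}"
  define J where "J = {i. i < n \<and> s * l i > 0}"
  assume "\<not> card I \<le> card J"
  moreover have "I \<subseteq> {0..<n}" "J \<subseteq> {0..<n}" unfolding I_def J_def by auto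
  ultimately obtain x where x: "x \<in> carrier_vec n" "x \<noteq> 0\<^sub>v n"
    and x_I: "\<forall>i \<in> {0..<n} - I. (transpose_mat Q *\<^sub>v x) $ i = 0"
    and x_J: "\<forall>j \<in> J. (transpose_mat P *\<^sub>v x) $ j = 0"
    using exists_vector_with_vanishing_coordinates[OF P Q] by (meson not_le)
  define y where "y = transpose_mat Q *\<^sub>v x"
  define z where "z = transpose_mat P *\<^sub>v x"
  have y_outside: "y $ i = 0" if "i < n" "i \<notin> I" for i
    using x_I that unfolding y_def by simp
  have z_J: "z $ j = 0" if "j \<in> J" for j
    using x_J that unfolding z_def by simp
  have "y \<noteq> 0\<^sub>v n"
  proof
    assume "y = 0\<^sub>v n"
    then have "transpose_mat Q *\<^sub>v x = 0\<^sub>v n" unfolding y_def .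
    moreover have "transpose_mat Q \<in> carrier_mat n n" using Q by simp
    ultimately have "det (transpose_mat Q) = 0"
      using det_0_iff_vec_prod_zero x by metis
    with detQ det_transpose[OF Q] show False by simp
  qed
  moreover have "y \<in> carrier_vec n" unfolding y_def using Q x by simp
  ultimately obtain k where k: "k < n" "y $ k \<noteq> 0"
    by (metis carrier_vecD eq_vecI index_zero_vec(1,2))
  have kI: "k \<in> I" using y_outside k by blast
  let ?q = "x \<bullet> ((P * mat_diag n l * transpose_mat P) *\<^sub>v x)"
  have "s * ?q = (\<Sum>i<n. s * d i * (y $ i)^2)"
    unfolding congr quadratic_form_congruent_diag[OF Q x(1)] y_def
    by (simp add: sum_distrib_left mult.assoc)
  moreover have "(\<Sum>i<n. s * d i * (y $ i)^2) > 0"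
  proof (rule sum_pos2)
    show "k \<in> {..<n}" using k by simp
    show "0 < s * d k * (y $ k)^2" using k kI by (simp add: I_def)
    show "0 \<le> s * d i * (y $ i)^2" if "i \<in> {..<n}" for i
      using y_outside that by (cases "i \<in> I") (auto simp: I_def)
  qed simp
  moreover have "s * ?q = (\<Sum>i<n. s * l i * (z $ i)^2)"
    unfolding quadratic_form_congruent_diag[OF P x(1)] z_def
    by (simp add: sum_distrib_left mult.assoc)
  moreover have "\<dots> \<le> 0"
  proof (rule sum_nonpos)
    fix i assume "i \<in> {..<n}"
    show "s * l i * (z $ i)^2 \<le> 0"
    proof (cases "i \<in> J")
      case True
      then show ?thesis using z_J by simp
    next
      case False
      with \<open>i \<in> {..<n}\<close> have "s * l i \<le> 0" by (auto simp: J_def)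
      then show ?thesis by (simp add: mult_nonpos_nonneg)
    qed
  qed
  ultimately show False by linarith
qed

lemma card_sign_partition:
  fixes d :: "nat \<Rightarrow> real"
  shows "card {i. i < n \<and> d i > 0} + card {i. i < n \<and> d i < 0} + card {i. i < n \<and> d i = 0} = n"
proof -
  have "{i. i < n \<and> d i > 0} \<union> {i. i < n \<and> d i < 0} \<union> {i. i < n \<and> d i = 0} = {..<n}"
    by auto
  moreover have "card ({i. i < n \<and> d i > 0} \<union> {i. i < n \<and> d i < 0} \<union> {i. i < n \<and> d i = 0}) =
      card {i. i < n \<and> d i > 0} + card {i. i < n \<and> d i < 0} + card {i. i < n \<and> d i = 0}"
    by (subst card_Un_disjoint; auto)+
  ultimately show ?thesis by simp
qed

theorem sylvester_law_of_inertia: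
  fixes A P :: "real mat" and l :: "nat \<Rightarrow> real"
  assumes P: "P \<in> carrier_mat n n" and detP: "det P \<noteq> 0"
    and A: "A = P * mat_diag n l * transpose_mat P"
  shows "pos_inertia A = card {i. i < n \<and> l i > 0}"
    and "neg_inertia A = card {i. i < n \<and> l i < 0}"
    and "zero_inertia A = card {i. i < n \<and> l i = 0}"
proof -
  have tP: "transpose_mat P \<in> carrier_mat n n" using P by simp
  have A_carrier: "A \<in> carrier_mat n n"
    unfolding A using P by (meson mult_carrier_mat mat_diag_dim transpose_carrier_mat)
  have "transpose_mat A = A"
    unfolding A using transpose_congruence_symmetric[OF mat_diag_dim _ tP, of l] by simp
  then obtain U d where U: "U \<in> carrier_mat n n" "transpose_mat U * U = 1\<^sub>m n"
    and diag: "transpose_mat U * A * U = mat_diag n d"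
    using real_symmetric_orthogonal_diagonalization[OF A_carrier] by blast
  have tU: "transpose_mat U \<in> carrier_mat n n" using U by simp
  have UtU: "U * transpose_mat U = 1\<^sub>m n" using mat_mult_left_right_inverse[OF tU U] .
  have "A = (U * transpose_mat U) * A * (U * transpose_mat U)" using A_carrier by (simp add: UtU)
  also have "\<dots> = U * (transpose_mat U * A * U) * transpose_mat U"
    using U tU A_carrier by (simp add: assoc_mult_mat[of _ n n _ n _ n])
  finally have A_U: "A = U * mat_diag n d * transpose_mat U" unfolding diag .
  have "det (transpose_mat U) * det U = 1"
    using det_mult[OF tU U(1)] U(2) by simp
  then have detU: "det U \<noteq> 0" by auto
  have "similar_mat_wit A (mat_diag n d) U (transpose_mat U)"
    unfolding similar_mat_wit_def Let_def using A_carrier U tU UtU A_U by auto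
  then have "char_poly A = char_poly (mat_diag n d)"
    using char_poly_similar unfolding similar_mat_def by blast
  note inertia_d = inertia_of_split_char_poly[OF this[unfolded char_poly_mat_diag]]
  have "card {i. i < n \<and> s * d i > 0} = card {i. i < n \<and> s * l i > 0}" for s
    using congruent_diag_sign_count_le[OF P U(1) detU, of l d s]
      congruent_diag_sign_count_le[OF U(1) P detP, of d l s] A A_U by (simp add: le_antisym)
  from this[of 1] this[of "-1"] have pos: "card {i. i < n \<and> d i > 0} = card {i. i < n \<and> l i > 0}"
    and neg: "card {i. i < n \<and> d i < 0} = card {i. i < n \<and> l i < 0}" by simp_all
  show "pos_inertia A = card {i. i < n \<and> l i > 0}" using inertia_d pos by simp
  show "neg_inertia A = card {i. i < n \<and> l i < 0}" using inertia_d neg by simp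
  show "zero_inertia A = card {i. i < n \<and> l i = 0}"
    using inertia_d pos neg card_sign_partition[of n d] card_sign_partition[of n l] by simp
qed

section \<open>The function \<open>\<Psi>\<^sub>S\<close> of \<open>1/x\<close>\<close>

text \<open>\<open>psi S\<close> is the function \<open>\<Psi>\<^bsub>S,1/x\<^esub>\<close> of Bourque and Ligh: it is determined on \<open>S\<close> by
  \<open>\<Sum>\<^bsub>y \<in> S, y dvd x\<^esub> psi S y = 1 / x\<close> (see \<open>sum_psi_divisors\<close>).\<close>

function psi :: "nat set \<Rightarrow> nat \<Rightarrow> real" where
  "psi S x = (if x = 0 then 0 else 1 / real x - (\<Sum>y\<in>{y\<in>S. y dvd x \<and> y < x}. psi S y))"
  by auto
termination by (relation "measure snd") auto

declare psi.simps [simp del]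

lemma sum_psi_divisors:
  assumes "finite S" and "x \<in> S" and "x > 0"
  shows "(\<Sum>y\<in>{y\<in>S. y dvd x}. psi S y) = 1 / real x"
proof -
  have "{y\<in>S. y dvd x} = insert x {y\<in>S. y dvd x \<and> y < x}"
    using assms by (auto dest: dvd_imp_le)
  then have "(\<Sum>y\<in>{y\<in>S. y dvd x}. psi S y) = psi S x + (\<Sum>y\<in>{y\<in>S. y dvd x \<and> y < x}. psi S y)"
    using assms(1) by simp
  also have "\<dots> = 1 / real x"
    using assms(3) by (subst psi.simps) simp
  finally show ?thesis .
qed

definition lower_sum :: "nat set \<Rightarrow> nat set \<Rightarrow> real" where
  "lower_sum S C = (\<Sum>y\<in>{y\<in>S. \<exists>c\<in>C. y dvd c}. psi S y)"

lemma lower_sum_empty [simp]: "lower_sum S {} = 0"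
  unfolding lower_sum_def by simp

lemma lower_sum_singleton:
  "finite S \<Longrightarrow> c \<in> S \<Longrightarrow> c > 0 \<Longrightarrow> lower_sum S {c} = 1 / real c"
  unfolding lower_sum_def using sum_psi_divisors by simp

lemma lower_sum_insert:
  assumes "finite S" and "c \<in> S" and "c > 0"
  shows "lower_sum S (insert c C) = lower_sum S C + 1 / real c - lower_sum S ((\<lambda>a. gcd a c) ` C)"
proof -
  define DC where "DC = {y\<in>S. \<exists>a\<in>C. y dvd a}"
  define Dc where "Dc = {y\<in>S. y dvd c}"
  have "{y\<in>S. \<exists>a\<in>insert c C. y dvd a} = DC \<union> Dc"
    and "{y\<in>S. \<exists>a\<in>(\<lambda>a. gcd a c) ` C. y dvd a} = DC \<inter> Dc"
    unfolding DC_def Dc_def by auto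
  then have "lower_sum S (insert c C) + lower_sum S ((\<lambda>a. gcd a c) ` C) = sum (psi S) DC + sum (psi S) Dc"
    unfolding lower_sum_def using assms(1) by (simp add: DC_def Dc_def sum.union_inter)
  moreover have "sum (psi S) Dc = 1 / real c"
    unfolding Dc_def using sum_psi_divisors[OF assms] .
  ultimately show ?thesis
    unfolding lower_sum_def DC_def by simp
qed

lemma lower_sum_chain:
  assumes "finite S" and G: "G \<subseteq> S" "finite G" "G \<noteq> {}" and "dvd_chain G" and "0 \<notin> G"
  shows "lower_sum S G = 1 / real (Max G)"
proof -
  define h where "h = Max G"
  have h: "h \<in> G" unfolding h_def using G by simp
  have "g dvd h" if "g \<in> G" for g
  proof -
    have "g \<le> h" unfolding h_def using G that by simp
    moreover have "g dvd h \<or> h dvd g" using \<open>dvd_chain G\<close> that h unfolding dvd_chain_def by blast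
    moreover have "g > 0" using that \<open>0 \<notin> G\<close> by (cases g) auto
    ultimately show ?thesis by (metis dvd_imp_le le_antisym)
  qed
  then have "{y\<in>S. \<exists>c\<in>G. y dvd c} = {y\<in>S. \<exists>c\<in>{h}. y dvd c}"
    using h by (auto intro: dvd_trans)
  then have "lower_sum S G = lower_sum S {h}" unfolding lower_sum_def by simp
  also have "\<dots> = 1 / real h"
    using lower_sum_singleton[OF assms(1)] h G \<open>0 \<notin> G\<close> by (metis gr0I subsetD)
  finally show ?thesis unfolding h_def .
qed

section \<open>Antichains whose meets lie in two chains\<close>

definition dvd_antichain :: "nat set \<Rightarrow> bool" where
  "dvd_antichain C \<longleftrightarrow> (\<forall>a\<in>C. \<forall>b\<in>C. a dvd b \<longrightarrow> a = b)"

definition gcds_in :: "nat set \<Rightarrow> nat set \<Rightarrow> bool" where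
  "gcds_in C Z \<longleftrightarrow> (\<forall>T. T \<subseteq> C \<longrightarrow> 2 \<le> card T \<longrightarrow> Gcd T \<in> Z)"

definition gcds_with_in :: "nat set \<Rightarrow> nat \<Rightarrow> nat set \<Rightarrow> bool" where
  "gcds_with_in C c Z \<longleftrightarrow> (\<forall>a\<in>C - {c}. gcd c a \<in> Z)"

lemma gcds_in_pair: "gcds_in C Z \<Longrightarrow> a \<in> C \<Longrightarrow> b \<in> C \<Longrightarrow> a \<noteq> b \<Longrightarrow> gcd a b \<in> Z"
  unfolding gcds_in_def by (erule allE[of _ "{a, b}"]) auto

lemma dvd_chainD: "dvd_chain Z \<Longrightarrow> u \<in> Z \<Longrightarrow> v \<in> Z \<Longrightarrow> u dvd v \<or> v dvd u"
  unfolding dvd_chain_def by blast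

locale max_gcd_pair =
  fixes C Z W :: "nat set" and k1 k2 :: nat
  assumes finite: "finite C" and pos: "0 \<notin> C" and antichain: "dvd_antichain C"
    and disjoint: "Z \<inter> W = {}" and chain_Z: "dvd_chain Z" and chain_W: "dvd_chain W"
    and gcds: "gcds_in C (Z \<union> W)"
    and k: "k1 \<in> C" "k2 \<in> C" "k1 \<noteq> k2"
    and m_Z: "gcd k1 k2 \<in> Z"
    and m_max: "\<And>a b. a \<in> C \<Longrightarrow> b \<in> C \<Longrightarrow> a \<noteq> b \<Longrightarrow> gcd a b \<le> gcd k1 k2"
begin

abbreviation m :: nat where "m \<equiv> gcd k1 k2"

definition K :: "nat set" where "K = {c\<in>C. m dvd c}"

definition R :: "nat set" where "R = {c\<in>C. \<not> m dvd c}"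

lemma C_eq: "C = K \<union> R"
  unfolding K_def R_def by auto

lemma k_K: "k1 \<in> K" "k2 \<in> K"
  unfolding K_def using k by auto

lemma m_pos: "m > 0"
  using k pos by (metis gcd_eq_0_iff gr0I)

lemma R_K_distinct: "r \<in> R \<Longrightarrow> k \<in> K \<Longrightarrow> r \<noteq> k"
  unfolding R_def K_def by auto

lemma gcd_cases: "a \<in> C \<Longrightarrow> b \<in> C \<Longrightarrow> a \<noteq> b \<Longrightarrow> gcd a b \<in> Z \<or> gcd a b \<in> W"
  using gcds_in_pair[OF gcds] by blast

lemma not_Z_and_W: "u \<in> Z \<Longrightarrow> u \<in> W \<Longrightarrow> False"
  using disjoint by blast

lemma gcd_K: "a \<in> K \<Longrightarrow> b \<in> K \<Longrightarrow> a \<noteq> b \<Longrightarrow> gcd a b = m"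
  using m_max[of a b] m_pos pos unfolding K_def
  by (metis (no_types, lifting) dvd_imp_le gcd_greatest gcd_pos_nat le_antisym mem_Collect_eq)

lemma gcd_K_eq_gcd_m:
  assumes "k \<in> K" and "gcd k a dvd m"
  shows "gcd k a = gcd m a"
proof (rule dvd_antisym)
  show "gcd k a dvd gcd m a" using assms(2) by simp
  have "m dvd k" using assms(1) unfolding K_def by simp
  then show "gcd m a dvd gcd k a" by (meson dvd_trans gcd_dvd1 gcd_dvd2 gcd_greatest)
qed

lemma R_gcd_not_multiple:
  assumes "r \<in> R"
  shows "\<not> m dvd gcd r a" and "\<not> m dvd gcd a r"
  using assms unfolding R_def by (auto dest: dvd_gcdD1 dvd_gcdD2)

lemma Z_not_multiple_dvd_m: "t \<in> Z \<Longrightarrow> \<not> m dvd t \<Longrightarrow> t dvd m"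
  using dvd_chainD[OF chain_Z m_Z] by blast

lemma gcd_K_R_W:
  assumes r: "r \<in> R" and rW: "gcd m r \<in> W" and k: "k \<in> K"
  shows "gcd k r \<in> W"
proof (rule ccontr)
  assume "gcd k r \<notin> W"
  moreover have "k \<in> C" "r \<in> C" using r k unfolding R_def K_def by auto
  ultimately have Z: "gcd k r \<in> Z" using gcd_cases R_K_distinct[OF r k] by metis
  have "\<not> m dvd gcd k r" using R_gcd_not_multiple(2)[OF r] .
  then have "gcd k r = gcd m r" using Z Z_not_multiple_dvd_m gcd_K_eq_gcd_m[OF k] by blast
  with rW \<open>gcd k r \<notin> W\<close> show False by simp
qed

lemma K_element_gcds_with_in:
  assumes "k \<in> K" and "\<forall>r\<in>R. gcd k r \<in> Z"
  shows "gcds_with_in C k Z"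
  unfolding gcds_with_in_def
proof
  fix a assume a: "a \<in> C - {k}"
  then show "gcd k a \<in> Z"
    using assms gcd_K[of k a] m_Z C_eq by (cases "a \<in> K") auto
qed

lemma lift_m_gcds_Z:
  assumes "\<forall>r\<in>R. gcd m r \<in> Z"
  shows "\<exists>c\<in>C. gcds_with_in C c Z"
proof -
  have Z_of_dvd: "gcd ka ra \<in> Z"
    if "gcd ka ra dvd gcd kb rb" "ka \<in> K" "kb \<in> K" "ka \<noteq> kb" "ra \<in> R" for ka kb ra rb
  proof -
    have "gcd ka ra dvd gcd ka kb" using that(1) by (meson dvd_trans gcd_dvd1 gcd_greatest gcd_dvd1)
    then have "gcd ka ra = gcd m ra"
      using gcd_K[OF that(2,3,4)] gcd_K_eq_gcd_m[OF that(2)] by simp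
    with assms that(5) show ?thesis by simp
  qed
  have "\<exists>k\<in>{k1, k2}. \<forall>r\<in>R. gcd k r \<in> Z"
  proof (rule ccontr)
    assume "\<not> ?thesis"
    then obtain r1 r2 where r: "r1 \<in> R" "r2 \<in> R" "gcd k1 r1 \<notin> Z" "gcd k2 r2 \<notin> Z" by auto
    then have "r1 \<in> C" "r2 \<in> C" unfolding R_def by auto
    then have W: "gcd k1 r1 \<in> W" "gcd k2 r2 \<in> W"
      using gcd_cases k R_K_distinct k_K r by metis+
    from dvd_chainD[OF chain_W W] show False
      using Z_of_dvd[OF _ k_K(1,2) k(3) r(1)] Z_of_dvd[OF _ k_K(2,1) k(3)[symmetric] r(2)] r(3,4)
      by blast
  qed
  then show ?thesis using K_element_gcds_with_in k_K k by blast
qed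

lemma lift_m_gcds_W:
  assumes gW: "\<forall>r\<in>R. gcd m r \<in> W" and r: "r \<in> R"
  shows "gcds_with_in C r W"
  unfolding gcds_with_in_def
proof
  fix a assume a: "a \<in> C - {r}"
  show "gcd r a \<in> W"
  proof (cases "a \<in> K")
    case True
    then show ?thesis using gcd_K_R_W[OF r _ True] gW r by (simp add: gcd.commute)
  next
    case False
    then have aR: "a \<in> R" using a C_eq by auto
    show ?thesis
    proof (rule ccontr)
      assume "gcd r a \<notin> W"
      moreover have "r \<in> C" using r unfolding R_def by simp
      ultimately have Z: "gcd r a \<in> Z" using gcd_cases a by blast
      have "\<not> m dvd gcd r a" using R_gcd_not_multiple(1)[OF r] .
      then have "gcd r a dvd k1"
        using Z_not_multiple_dvd_m[OF Z] by (meson dvd_trans gcd_dvd1)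
      then have ra: "gcd r a dvd gcd k1 r" "gcd r a dvd gcd k1 a" by simp_all
      have W: "gcd k1 r \<in> W" "gcd k1 a \<in> W"
        using gcd_K_R_W[OF r _ k_K(1)] gcd_K_R_W[OF aR _ k_K(1)] gW r aR by simp_all
      from dvd_chainD[OF chain_W W] show False
      proof
        assume "gcd k1 r dvd gcd k1 a"
        then have "gcd k1 r dvd gcd r a" by (meson dvd_trans gcd_dvd2 gcd_greatest)
        with ra have "gcd k1 r = gcd r a" by (simp add: dvd_antisym)
        with W Z show False using not_Z_and_W by metis
      next
        assume "gcd k1 a dvd gcd k1 r"
        then have "gcd k1 a dvd gcd r a" by (meson dvd_trans gcd_dvd2 gcd_greatest)
        with ra have "gcd k1 a = gcd r a" by (simp add: dvd_antisym)
        with W Z show False using not_Z_and_W by metis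
      qed
    qed
  qed
qed

lemma lift_R_gcds_W:
  assumes r: "r \<in> R" and pure: "gcds_with_in (R \<union> {m}) r W"
  shows "gcds_with_in C r W"
  unfolding gcds_with_in_def
proof
  fix a assume a: "a \<in> C - {r}"
  have "gcd m r \<in> W"
    using pure r R_K_distinct[OF r] unfolding gcds_with_in_def R_def by (auto simp: gcd.commute)
  then show "gcd r a \<in> W"
    using a pure gcd_K_R_W[OF r] C_eq unfolding gcds_with_in_def by (auto simp: gcd.commute)
qed

text \<open>A gcd of \<open>k'\<close> with an element of \<open>R\<close> lying in \<open>W\<close> would be comparable with
  \<open>gcd kb r \<in> W\<close>, and in either direction this forces an element into both chains.\<close>

lemma gcd_other_K_R_Z:
  assumes r: "r \<in> R" and pure: "gcds_with_in (R \<union> {m}) r Z"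
    and kb: "kb \<in> K" "gcd kb r \<in> W" and k': "k' \<in> K" "k' \<noteq> kb" and a: "a \<in> R"
  shows "gcd k' a \<in> Z"
proof (rule ccontr)
  have mr_Z: "gcd m r \<in> Z"
    using pure r R_K_distinct[OF r] unfolding gcds_with_in_def R_def by (auto simp: gcd.commute)
  have m_eq: "gcd kb k' = m" using gcd_K[OF kb(1) k'(1)] k'(2) by simp
  have not_dvd_m: "\<not> gcd kb r dvd m"
    using gcd_K_eq_gcd_m[OF kb(1)] kb(2) mr_Z not_Z_and_W by metis
  assume "gcd k' a \<notin> Z"
  moreover have "a \<in> C" "k' \<in> C" using a k' unfolding R_def K_def by auto
  ultimately have W: "gcd k' a \<in> W" using gcd_cases R_K_distinct[OF a k'(1)] by metis
  from dvd_chainD[OF chain_W kb(2) W] show False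
  proof
    assume "gcd kb r dvd gcd k' a"
    then have "gcd kb r dvd gcd kb k'" by (meson dvd_trans gcd_dvd1 gcd_greatest)
    with not_dvd_m m_eq show False by simp
  next
    assume dvd: "gcd k' a dvd gcd kb r"
    then have "gcd k' a dvd gcd kb k'" by (meson dvd_trans gcd_dvd1 gcd_greatest)
    then have ma: "gcd k' a = gcd m a" using gcd_K_eq_gcd_m[OF k'(1)] m_eq by simp
    show False
    proof (cases "a = r")
      case True
      with ma W mr_Z show False using not_Z_and_W by metis
    next
      case False
      then have Z: "gcd r a \<in> Z" using pure a unfolding gcds_with_in_def by simp
      then have "gcd r a dvd gcd m a"
        using Z_not_multiple_dvd_m R_gcd_not_multiple(1)[OF r] by simp
      moreover have "gcd k' a dvd gcd r a"
        using dvd by (meson dvd_trans gcd_dvd2 gcd_greatest)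
      ultimately have "gcd k' a = gcd r a" using ma by (simp add: dvd_antisym)
      with W Z show False using not_Z_and_W by metis
    qed
  qed
qed

lemma lift_R_gcds_Z:
  assumes r: "r \<in> R" and pure: "gcds_with_in (R \<union> {m}) r Z"
  shows "\<exists>c\<in>C. gcds_with_in C c Z"
proof (cases "\<forall>k\<in>K. gcd k r \<in> Z")
  case True
  then have "gcds_with_in C r Z"
    using pure C_eq unfolding gcds_with_in_def by (auto simp: gcd.commute)
  then show ?thesis using r unfolding R_def by blast
next
  case False
  then obtain kb where kb: "kb \<in> K" "gcd kb r \<notin> Z" by blast
  moreover have "kb \<in> C" "r \<in> C" using kb r unfolding K_def R_def by auto
  ultimately have kb_W: "gcd kb r \<in> W" using gcd_cases R_K_distinct[OF r kb(1)] by metis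
  obtain k' where k': "k' \<in> K" "k' \<noteq> kb" using k_K k(3) by metis
  then have "gcds_with_in C k' Z"
    using K_element_gcds_with_in gcd_other_K_R_Z[OF r pure kb(1) kb_W] by blast
  then show ?thesis using k' unfolding K_def by blast
qed

lemma gcds_with_in_lift:
  assumes "R \<noteq> {} \<Longrightarrow> \<exists>c\<in>R \<union> {m}. gcds_with_in (R \<union> {m}) c Z \<or> gcds_with_in (R \<union> {m}) c W"
  shows "\<exists>c\<in>C. gcds_with_in C c Z \<or> gcds_with_in C c W"
proof (cases "R = {}")
  case True
  then show ?thesis using K_element_gcds_with_in[OF k_K(1)] k by blast
next
  case False
  then obtain c where c: "c \<in> R \<union> {m}"
    and pure: "gcds_with_in (R \<union> {m}) c Z \<or> gcds_with_in (R \<union> {m}) c W"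
    using assms by blast
  have m_R: "m \<notin> R" unfolding R_def by simp
  consider "c = m" | "c \<in> R" using c by blast
  then show ?thesis
  proof cases
    case 1
    have "\<forall>r\<in>R. gcd m r \<in> Z" if "gcds_with_in (R \<union> {m}) c Z"
      using that m_R unfolding 1 gcds_with_in_def by auto
    moreover have "\<forall>r\<in>R. gcd m r \<in> W" if "gcds_with_in (R \<union> {m}) c W"
      using that m_R unfolding 1 gcds_with_in_def by auto
    ultimately show ?thesis
      using pure lift_m_gcds_Z lift_m_gcds_W False R_def by blast
  next
    case 2
    then show ?thesis using pure lift_R_gcds_Z lift_R_gcds_W R_def by blast
  qed
qed

lemma reduced_card_less: "card (R \<union> {m}) < card C"
proof -
  have "R \<subseteq> C - {k1, k2}" unfolding R_def by auto
  then have "card R \<le> card C - 2"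
    using card_mono[of "C - {k1, k2}" R] finite k by (simp add: card_Diff_subset)
  moreover have "card C \<ge> 2"
    using card_mono[OF finite, of "{k1, k2}"] k by simp
  ultimately show ?thesis using finite by (simp add: card_insert_if R_def)
qed

lemma reduced_card_ge_2: "R \<noteq> {} \<Longrightarrow> 2 \<le> card (R \<union> {m})"
  using finite unfolding R_def by (auto simp: card_insert_if Suc_le_eq card_gt_0_iff)

lemma reduced_finite: "finite (R \<union> {m})"
  using finite unfolding R_def by simp

lemma reduced_pos: "0 \<notin> R \<union> {m}"
  using pos m_pos unfolding R_def by auto

lemma reduced_antichain: "dvd_antichain (R \<union> {m})"
  unfolding dvd_antichain_def
proof (intro ballI impI)
  fix a b assume a: "a \<in> R \<union> {m}" and b: "b \<in> R \<union> {m}" and ab: "a dvd b"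
  show "a = b"
  proof (cases "b = m")
    case True
    then have "a dvd k1" using ab dvd_trans by (metis gcd_dvd1)
    then show ?thesis
      using a True antichain k(1) unfolding dvd_antichain_def R_def by auto
  next
    case False
    then have "b \<in> R" using b by simp
    then show ?thesis
      using a ab antichain unfolding dvd_antichain_def R_def by (auto dest: dvd_trans)
  qed
qed

lemma reduced_gcds_in: "gcds_in (R \<union> {m}) (Z \<union> W)"
  unfolding gcds_in_def
proof (intro allI impI)
  fix T assume T: "T \<subseteq> R \<union> {m}" and card_T: "2 \<le> card T"
  show "Gcd T \<in> Z \<union> W"
  proof (cases "m \<in> T")
    case False
    then have "T \<subseteq> C" using T unfolding R_def by auto
    then show ?thesis using gcds card_T unfolding gcds_in_def by blast
  next
    case True
    define T' where "T' = insert k1 (insert k2 (T - {m}))"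
    have "Gcd T = Gcd T'"
      using True unfolding T'_def by (metis Gcd_insert gcd.assoc insert_Diff)
    moreover have "T' \<subseteq> C" unfolding T'_def using T k unfolding R_def by auto
    moreover have "2 \<le> card T'"
      using card_mono[of T' "{k1, k2}"] \<open>T' \<subseteq> C\<close> finite finite_subset k(3)
      unfolding T'_def by fastforce
    ultimately show ?thesis using gcds unfolding gcds_in_def by auto
  qed
qed

end

lemma obtain_max_gcd_pair:
  fixes C :: "nat set"
  assumes "finite C" and "2 \<le> card C"
  obtains k1 k2 where "k1 \<in> C" "k2 \<in> C" "k1 \<noteq> k2"
    and "\<And>a b. a \<in> C \<Longrightarrow> b \<in> C \<Longrightarrow> a \<noteq> b \<Longrightarrow> gcd a b \<le> gcd k1 k2"
proof -
  define PG where "PG = {gcd a b | a b. a \<in> C \<and> b \<in> C \<and> a \<noteq> b}"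
  have "PG \<subseteq> (\<lambda>(a, b). gcd a b) ` (C \<times> C)" unfolding PG_def by auto
  then have "finite PG" using assms(1) by (meson finite_SigmaI finite_imageI finite_subset)
  moreover have "PG \<noteq> {}"
  proof -
    obtain a b where "a \<in> C" "b \<in> C" "a \<noteq> b"
      using assms card_le_Suc0_iff_eq[of C] by force
    then show ?thesis unfolding PG_def by blast
  qed
  ultimately have "Max PG \<in> PG" by simp
  then obtain k1 k2 where k: "k1 \<in> C" "k2 \<in> C" "k1 \<noteq> k2" "Max PG = gcd k1 k2"
    unfolding PG_def by blast
  moreover have "gcd a b \<le> gcd k1 k2" if "a \<in> C" "b \<in> C" "a \<noteq> b" for a b
    using that \<open>finite PG\<close> k(4) unfolding PG_def by (metis (mono_tags, lifting) Max_ge mem_Collect_eq)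
  ultimately show ?thesis using that by blast
qed

text \<open>Induction step: with \<open>m\<close> a largest gcd of two distinct elements, pass to the smaller
  antichain \<open>R \<union> {m}\<close> and lift the element found there back to \<open>C\<close>.\<close>

lemma antichain_gcds_with_in_chain:
  assumes "finite C" "2 \<le> card C" "0 \<notin> C" "dvd_antichain C"
    "X \<inter> Y = {}" "dvd_chain X" "dvd_chain Y" "gcds_in C (X \<union> Y)"
  shows "\<exists>c\<in>C. gcds_with_in C c X \<or> gcds_with_in C c Y"
  using assms
proof (induction "card C" arbitrary: C X Y rule: less_induct)
  case less
  obtain k1 k2 where k: "k1 \<in> C" "k2 \<in> C" "k1 \<noteq> k2"
    and max: "\<And>a b. a \<in> C \<Longrightarrow> b \<in> C \<Longrightarrow> a \<noteq> b \<Longrightarrow> gcd a b \<le> gcd k1 k2"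
    using obtain_max_gcd_pair[OF less.prems(1,2)] by blast
  have "gcd k1 k2 \<in> X \<union> Y" using gcds_in_pair[OF less.prems(8) k] .
  then consider "gcd k1 k2 \<in> X" | "gcd k1 k2 \<in> Y" by blast
  then show ?case
  proof cases
    case 1
    interpret max_gcd_pair C X Y k1 k2
      using less.prems k 1 max by unfold_locales auto
    show ?thesis
      by (rule gcds_with_in_lift, rule less.hyps[OF reduced_card_less reduced_finite
          reduced_card_ge_2 reduced_pos reduced_antichain less.prems(5-7) reduced_gcds_in])
  next
    case 2
    interpret max_gcd_pair C Y X k1 k2
      using less.prems k 2 max by unfold_locales (auto simp: Un_commute)
    have "\<exists>c\<in>C. gcds_with_in C c Y \<or> gcds_with_in C c X"
      by (rule gcds_with_in_lift, rule less.hyps[OF reduced_card_less reduced_finite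
          reduced_card_ge_2 reduced_pos reduced_antichain _ less.prems(7,6) reduced_gcds_in])
        (use less.prems(5) in auto)
    then show ?thesis by blast
  qed
qed

section \<open>The sign of \<open>psi\<close>\<close>

lemma two_mult_le_of_proper_dvd:
  fixes h c :: nat
  assumes "h dvd c" and "h \<noteq> c" and "c > 0"
  shows "2 * real h \<le> real c"
proof -
  obtain k where k: "c = h * k" using assms(1) unfolding dvd_def by blast
  with assms(2,3) have "k \<ge> 2" by (cases k) auto
  with k show ?thesis by (metis mult.commute mult_le_mono2 of_nat_le_iff of_nat_mult of_nat_numeral)
qed

lemma lower_sum_remove_pure:
  assumes S: "finite S" "0 \<notin> S" "gcd_closed S" and C: "C \<subseteq> S" "c0 \<in> C" "C - {c0} \<noteq> {}"
    and pure: "gcds_with_in C c0 Z" and chain: "dvd_chain Z"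
  obtains c1 where "c1 \<in> C - {c0}"
    and "lower_sum S C = lower_sum S (C - {c0}) + 1 / real c0 - 1 / real (gcd c1 c0)"
proof -
  define G where "G = (\<lambda>a. gcd a c0) ` (C - {c0})"
  have "G \<subseteq> Z" using pure unfolding G_def gcds_with_in_def by (auto simp: gcd.commute)
  then have "dvd_chain G" using chain unfolding dvd_chain_def by blast
  moreover have "G \<subseteq> S" using S(3) C(1,2) unfolding G_def gcd_closed_def by auto
  moreover have "finite C" using S(1) C(1) finite_subset by blast
  then have "finite G" "G \<noteq> {}" unfolding G_def using C(3) by auto
  ultimately have G: "lower_sum S G = 1 / real (Max G)" "Max G \<in> G"
    using lower_sum_chain[OF S(1)] S(2) by auto
  then obtain c1 where c1: "c1 \<in> C - {c0}" "Max G = gcd c1 c0" unfolding G_def by auto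
  have "C = insert c0 (C - {c0})" using C(2) by auto
  then have "lower_sum S C = lower_sum S (C - {c0}) + 1 / real c0 - lower_sum S G"
    unfolding G_def using lower_sum_insert[OF S(1)] C S(2) by (metis gr0I subsetD)
  with G c1 that show ?thesis by simp
qed

lemma lower_sum_nonpos:
  assumes S: "finite S" "0 \<notin> S" "gcd_closed S"
    and "C \<subseteq> S" "2 \<le> card C" "dvd_antichain C"
    and "X \<inter> Y = {}" "dvd_chain X" "dvd_chain Y" "gcds_in C (X \<union> Y)"
  shows "lower_sum S C \<le> 0"
  using assms(4-)
proof (induction "card C" arbitrary: C rule: less_induct)
  case less
  note C = less.prems(1) and card_C = less.prems(2) and antichain = less.prems(3)
  have fin: "finite C" and pos: "0 \<notin> C" using C S finite_subset by auto
  obtain c0 Z where c0: "c0 \<in> C" "gcds_with_in C c0 Z" and "Z = X \<or> Z = Y"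
    using antichain_gcds_with_in_chain[OF fin card_C pos antichain less.prems(4-)] by blast
  then have "dvd_chain Z" using less.prems(5,6) by auto
  define C' where "C' = C - {c0}"
  have card_C': "card C' = card C - 1" unfolding C'_def using c0 fin by simp
  then have "C' \<noteq> {}" using card_C by auto
  then obtain c1 where c1: "c1 \<in> C'"
    and sum: "lower_sum S C = lower_sum S C' + 1 / real c0 - 1 / real (gcd c1 c0)"
    using lower_sum_remove_pure[OF S C c0(1) _ c0(2) \<open>dvd_chain Z\<close>] unfolding C'_def by blast
  define h where "h = gcd c1 c0"
  have c1C: "c1 \<in> C" "c1 \<noteq> c0" using c1 unfolding C'_def by auto
  have c0_pos: "c0 > 0" and c1_pos: "c1 > 0" using pos c0 c1C by (auto intro: gr0I)
  then have h_pos: "h > 0" unfolding h_def by simp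
  have "h \<noteq> c0" using antichain c0(1) c1C unfolding h_def dvd_antichain_def by (metis gcd_dvd1)
  moreover have "h \<noteq> c1" using antichain c0(1) c1C unfolding h_def dvd_antichain_def by (metis gcd_dvd2)
  ultimately have h_c0: "2 * real h \<le> real c0" and h_c1: "2 * real h \<le> real c1"
    using two_mult_le_of_proper_dvd c0_pos c1_pos unfolding h_def by auto
  have c0_le: "1 / real c0 \<le> 1 / (2 * real h)"
    using h_c0 h_pos by (simp add: frac_le)
  show ?case
  proof (cases "card C' = 1")
    case True
    then have "C' = {c1}" using c1 by (metis card_1_singletonE singletonD)
    then have "lower_sum S C' = 1 / real c1"
      using lower_sum_singleton[OF S(1)] C c1C c1_pos by auto
    also have "\<dots> \<le> 1 / (2 * real h)" using h_c1 h_pos by (simp add: frac_le)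
    finally show ?thesis using sum c0_le unfolding h_def by simp
  next
    case False
    moreover have "card C' \<noteq> 0" using \<open>C' \<noteq> {}\<close> fin unfolding C'_def by simp
    ultimately have "2 \<le> card C'" by linarith
    moreover have "dvd_antichain C'" "gcds_in C' (X \<union> Y)"
      using antichain less.prems(7) unfolding C'_def dvd_antichain_def gcds_in_def by blast+
    ultimately have "lower_sum S C' \<le> 0"
      using less.hyps[of C'] card_C card_C' C less.prems(4-6) unfolding C'_def by fastforce
    moreover have "1 / real c0 < 1 / real h" using h_c0 h_pos by (simp add: frac_less2)
    ultimately show ?thesis using sum unfolding h_def by simp
  qed
qed

lemma lower_set_covered_by:
  assumes S: "finite S" "0 \<notin> S" and x: "x \<in> S"
  shows "{y\<in>S. y dvd x \<and> y < x} = {y\<in>S. \<exists>c\<in>covered_by S x. y dvd c}"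
proof
  show "{y\<in>S. \<exists>c\<in>covered_by S x. y dvd c} \<subseteq> {y\<in>S. y dvd x \<and> y < x}"
  proof clarify
    fix y c assume y: "y \<in> S" and c: "c \<in> covered_by S x" "y dvd c"
    have c_x: "c \<in> S" "c dvd x" "c \<noteq> x" using c unfolding covered_by_def by auto
    have "x > 0" "c > 0" using S(2) x c_x(1) by (auto intro: gr0I)
    have "y \<le> c" by (rule dvd_imp_le[OF c(2) \<open>c > 0\<close>])
    moreover have "c < x" using dvd_imp_le[OF c_x(2) \<open>x > 0\<close>] c_x(3) by linarith
    ultimately show "y dvd x \<and> y < x" using dvd_trans[OF c(2) c_x(2)] by simp
  qed
next
  show "{y\<in>S. y dvd x \<and> y < x} \<subseteq> {y\<in>S. \<exists>c\<in>covered_by S x. y dvd c}"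
  proof clarify
    fix y assume y: "y \<in> S" "y dvd x" "y < x"
    text \<open>The largest proper divisor of \<open>x\<close> in \<open>S\<close> above \<open>y\<close> is covered by \<open>x\<close>.\<close>
    define Z where "Z = {z\<in>S. y dvd z \<and> z dvd x \<and> z \<noteq> x}"
    have "finite Z" "y \<in> Z" unfolding Z_def using S(1) y by auto
    define c where "c = Max Z"
    have cZ: "c \<in> Z" and c_max: "\<And>z. z \<in> Z \<Longrightarrow> z \<le> c"
      unfolding c_def using \<open>finite Z\<close> \<open>y \<in> Z\<close> by (auto intro: Max_in)
    have "c \<in> covered_by S x" unfolding covered_by_def
    proof (intro CollectI conjI)
      show "c \<in> S" "c dvd x" "c \<noteq> x" using cZ unfolding Z_def by auto
      show "\<not> (\<exists>z\<in>S. c dvd z \<and> z dvd x \<and> z \<noteq> c \<and> z \<noteq> x)"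
      proof
        assume "\<exists>z\<in>S. c dvd z \<and> z dvd x \<and> z \<noteq> c \<and> z \<noteq> x"
        then obtain z where z: "z \<in> S" "c dvd z" "z dvd x" "z \<noteq> c" "z \<noteq> x" by blast
        moreover have "y dvd c" using cZ unfolding Z_def by simp
        ultimately have "z \<in> Z" using dvd_trans[of y c z] unfolding Z_def by simp
        moreover have "z > 0" using z S(2) by (auto intro: gr0I)
        ultimately show False using c_max dvd_imp_le[OF z(2)] z(4) by (metis le_antisym)
      qed
    qed
    moreover have "y dvd c" using cZ unfolding Z_def by simp
    ultimately show "\<exists>c\<in>covered_by S x. y dvd c" by blast
  qed
qed

lemma psi_covered_by:
  assumes "finite S" "0 \<notin> S" "x \<in> S"
  shows "psi S x = 1 / real x - lower_sum S (covered_by S x)"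
  using assms lower_set_covered_by[OF assms] by (subst psi.simps) (auto simp: lower_sum_def)

lemma covered_by_antichain: "dvd_antichain (covered_by S x)"
  unfolding dvd_antichain_def covered_by_def by blast

lemma covered_by_gcds_in_meetcl:
  assumes "finite S"
  shows "gcds_in (covered_by S x) (meetcl (covered_by S x) - covered_by S x)"
  unfolding gcds_in_def
proof (intro allI impI)
  fix T assume T: "T \<subseteq> covered_by S x" and card_T: "2 \<le> card T"
  then have "finite T" "T \<noteq> {}" by (auto intro: card_ge_0_finite)
  with T have "Gcd T \<in> meetcl (covered_by S x)" unfolding meetcl_def by blast
  moreover have "Gcd T \<notin> covered_by S x"
  proof
    assume in_C: "Gcd T \<in> covered_by S x"
    obtain a b where "a \<in> T" "b \<in> T" "a \<noteq> b"
      using card_T card_le_Suc0_iff_eq[OF \<open>finite T\<close>] by force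
    then obtain t where "t \<in> T" "t \<noteq> Gcd T" by metis
    moreover have "Gcd T dvd t" using \<open>t \<in> T\<close> by (rule Gcd_dvd)
    ultimately show False
      using covered_by_antichain[of S x] in_C T unfolding dvd_antichain_def by blast
  qed
  ultimately show "Gcd T \<in> meetcl (covered_by S x) - covered_by S x" by blast
qed

text \<open>If \<open>x\<close> covers a single \<open>c\<close> then \<open>psi S x = 1/x - 1/c\<close>; otherwise \<open>lower_sum\<close> of the
  covered set is non-positive.\<close>

lemma psi_sign:
  assumes S: "finite S" "0 \<notin> S" "gcd_closed S" and x: "x \<in> S"
    and "generates_double_chain S x"
  shows "card (covered_by S x) = 1 \<Longrightarrow> psi S x < 0"
    and "card (covered_by S x) \<noteq> 1 \<Longrightarrow> psi S x > 0"
proof -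
  define C where "C = covered_by S x"
  have C_S: "C \<subseteq> S" unfolding C_def covered_by_def by auto
  have x_pos: "x > 0" using x S(2) by (auto intro: gr0I)
  have psi: "psi S x = 1 / real x - lower_sum S C"
    unfolding C_def by (rule psi_covered_by[OF S(1,2) x])
  show "card (covered_by S x) = 1 \<Longrightarrow> psi S x < 0"
  proof -
    assume "card (covered_by S x) = 1"
    then obtain c where C: "C = {c}" unfolding C_def by (meson card_1_singletonE)
    then have c: "c \<in> S" "c dvd x" "c \<noteq> x" unfolding C_def covered_by_def by auto
    have "c > 0" using c(1) S(2) by (auto intro: gr0I)
    moreover have "c < x" using dvd_imp_le[OF c(2) x_pos] c(3) by linarith
    ultimately show "psi S x < 0"
      using psi lower_sum_singleton[OF S(1) c(1)] C by (simp add: frac_less2)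
  qed
  show "card (covered_by S x) \<noteq> 1 \<Longrightarrow> psi S x > 0"
  proof -
    assume card: "card (covered_by S x) \<noteq> 1"
    have "lower_sum S C \<le> 0"
    proof (cases "card C = 0")
      case True
      moreover have "finite C" using C_S S(1) finite_subset by blast
      ultimately have "C = {}" by simp
      then show ?thesis by simp
    next
      case False
      with card have "2 \<le> card C" unfolding C_def by linarith
      moreover obtain A B where "A \<inter> B = {}" "dvd_chain A" "dvd_chain B" "meetcl C - C = A \<union> B"
        using assms(5) unfolding generates_double_chain_def C_def by blast
      moreover have "gcds_in C (meetcl C - C)"
        unfolding C_def by (rule covered_by_gcds_in_meetcl[OF S(1)])
      ultimately show ?thesis
        using lower_sum_nonpos[OF S C_S] covered_by_antichain unfolding C_def by metis
    qed
    moreover have "1 / real x > 0" using x_pos by simp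
    ultimately show "psi S x > 0" using psi by linarith
  qed
qed

section \<open>Factorization of the LCM matrix\<close>

definition divisor_mat :: "nat list \<Rightarrow> real mat" where
  "divisor_mat xs = mat (length xs) (length xs) (\<lambda>(i, k). if xs ! k dvd xs ! i then real (xs ! i) else 0)"

lemma divisor_mat_carrier: "divisor_mat xs \<in> carrier_mat (length xs) (length xs)"
  unfolding divisor_mat_def by simp

lemma sum_filter_nth_distinct:
  assumes "distinct xs"
  shows "(\<Sum>k\<in>{k. k < length xs \<and> Q (xs ! k)}. f (xs ! k)) = (\<Sum>y\<in>{y\<in>set xs. Q y}. f y)"
proof -
  let ?A = "{k. k < length xs \<and> Q (xs ! k)}"
  have "inj_on ((!) xs) ?A"
    using assms by (auto simp: inj_on_def nth_eq_iff_index_eq)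
  moreover have "(!) xs ` ?A = {y\<in>set xs. Q y}"
    by (auto simp: in_set_conv_nth)
  ultimately have "(\<Sum>y\<in>{y\<in>set xs. Q y}. f y) = (\<Sum>k\<in>?A. (f \<circ> (!) xs) k)"
    by (metis sum.reindex)
  then show ?thesis by simp
qed

lemma card_filter_nth_distinct:
  "distinct xs \<Longrightarrow> card {k. k < length xs \<and> Q (xs ! k)} = card {y\<in>set xs. Q y}"
  using sum_filter_nth_distinct[where f = "\<lambda>_. 1 :: nat"] by simp

text \<open>The Bourque--Ligh factorization \<open>[S] = E \<Delta> E\<^sup>T\<close> with \<open>\<Delta> = diag(psi S x\<^sub>k)\<close>: the
  \<open>(i,j)\<close> entry is \<open>x\<^sub>i x\<^sub>j \<Sum>\<^bsub>x\<^sub>k | gcd x\<^sub>i x\<^sub>j\<^esub> psi S x\<^sub>k = x\<^sub>i x\<^sub>j / gcd x\<^sub>i x\<^sub>j\<close>, which needs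
  \<open>gcd x\<^sub>i x\<^sub>j \<in> S\<close>.\<close>

lemma lcm_matrix_factorization:
  fixes xs :: "nat list"
  assumes dist: "distinct xs" and set: "set xs = S" and pos: "0 \<notin> S" and gc: "gcd_closed S"
  defines "E \<equiv> divisor_mat xs" and "n \<equiv> length xs"
  shows "lcm_matrix xs = E * mat_diag n (\<lambda>k. psi S (xs ! k)) * transpose_mat E"
proof (rule eq_matI)
  have E: "E \<in> carrier_mat n n" unfolding E_def n_def by (rule divisor_mat_carrier)
  have ED: "E * mat_diag n (\<lambda>k. psi S (xs ! k)) = mat n n (\<lambda>(i, k). E $$ (i, k) * psi S (xs ! k))"
    by (rule mat_diag_mult_right[OF E])
  fix i j assume "i < dim_row (E * mat_diag n (\<lambda>k. psi S (xs ! k)) * transpose_mat E)"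
    "j < dim_col (E * mat_diag n (\<lambda>k. psi S (xs ! k)) * transpose_mat E)"
  then have ij: "i < n" "j < n" using E by auto
  define a where "a = xs ! i"
  define b where "b = xs ! j"
  define g where "g = gcd a b"
  have "a \<in> S" "b \<in> S" unfolding a_def b_def using ij set n_def by auto
  then have g: "g \<in> S" "g > 0" unfolding g_def using gc pos unfolding gcd_closed_def by (auto intro: gr0I)
  have "(E * mat_diag n (\<lambda>k. psi S (xs ! k)) * transpose_mat E) $$ (i, j)
      = (\<Sum>k\<in>{0..<n}. E $$ (i, k) * psi S (xs ! k) * E $$ (j, k))"
    unfolding ED using E ij by (simp add: scalar_prod_def)
  also have "\<dots> = (\<Sum>k\<in>{0..<n}. if xs ! k dvd g then real a * real b * psi S (xs ! k) else 0)"
  proof (rule sum.cong)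
    fix k assume "k \<in> {0..<n}"
    then have "E $$ (i, k) = (if xs ! k dvd a then real a else 0)"
      and "E $$ (j, k) = (if xs ! k dvd b then real b else 0)"
      unfolding E_def divisor_mat_def a_def b_def using ij n_def by auto
    then show "E $$ (i, k) * psi S (xs ! k) * E $$ (j, k) =
        (if xs ! k dvd g then real a * real b * psi S (xs ! k) else 0)"
      unfolding g_def by simp
  qed simp
  also have "\<dots> = (\<Sum>k\<in>{k. k < n \<and> xs ! k dvd g}. real a * real b * psi S (xs ! k))"
    by (simp add: sum.If_cases atLeast0LessThan lessThan_def Collect_conj_eq Int_commute)
  also have "\<dots> = real a * real b * (\<Sum>y\<in>{y\<in>S. y dvd g}. psi S y)"
    using sum_filter_nth_distinct[OF dist, where Q = "\<lambda>y. y dvd g" and f = "\<lambda>y. real a * real b * psi S y"] set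
    by (simp add: n_def sum_distrib_left)
  also have "\<dots> = real a * real b / real g"
    using sum_psi_divisors[OF _ g] set by auto
  also have "\<dots> = real (lcm a b)"
    using g(2) unfolding g_def by (simp add: field_simps flip: of_nat_mult prod_gcd_lcm_nat)
  also have "\<dots> = lcm_matrix xs $$ (i, j)"
    unfolding lcm_matrix_def a_def b_def using ij n_def by simp
  finally show "lcm_matrix xs $$ (i, j) = (E * mat_diag n (\<lambda>k. psi S (xs ! k)) * transpose_mat E) $$ (i, j)"
    by simp
qed (auto simp: lcm_matrix_def E_def n_def divisor_mat_def)

text \<open>A kernel vector of \<open>divisor_mat xs\<close> sums to zero over the divisors of every \<open>x\<^sub>i\<close>;
  induction on \<open>x\<^sub>i\<close> then shows that it vanishes.\<close>

lemma det_divisor_mat_nonzero: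
  assumes dist: "distinct xs" and pos: "0 \<notin> set xs"
  shows "det (divisor_mat xs) \<noteq> 0"
proof
  define n where "n = length xs"
  have E: "divisor_mat xs \<in> carrier_mat n n" unfolding n_def by (rule divisor_mat_carrier)
  assume "det (divisor_mat xs) = 0"
  then obtain v where v: "v \<in> carrier_vec n" "v \<noteq> 0\<^sub>v n" "divisor_mat xs *\<^sub>v v = 0\<^sub>v n"
    using det_0_iff_vec_prod_zero[OF E] by auto
  have x_pos: "xs ! i > 0" if "i < n" for i using pos that unfolding n_def by (metis gr0I nth_mem)
  have divisor_sum: "(\<Sum>k\<in>{k. k < n \<and> xs ! k dvd xs ! i}. v $ k) = 0" if i: "i < n" for i
  proof -
    have "0 = (divisor_mat xs *\<^sub>v v) $ i" using v(3) i by simp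
    also have "\<dots> = (\<Sum>k\<in>{0..<n}. if xs ! k dvd xs ! i then real (xs ! i) * v $ k else 0)"
      using E v(1) i by (auto simp: scalar_prod_def divisor_mat_def n_def intro: sum.cong)
    also have "\<dots> = real (xs ! i) * (\<Sum>k\<in>{k. k < n \<and> xs ! k dvd xs ! i}. v $ k)"
      by (simp add: sum.If_cases atLeast0LessThan lessThan_def Collect_conj_eq Int_commute sum_distrib_left)
    finally show ?thesis using x_pos[OF i] by simp
  qed
  have "v $ i = 0" if "i < n" for i
    using that
  proof (induction "xs ! i" arbitrary: i rule: less_induct)
    case less
    have "{k. k < n \<and> xs ! k dvd xs ! i} = insert i {k. k < n \<and> xs ! k dvd xs ! i \<and> k \<noteq> i}"
      using less.prems by auto
    moreover have "v $ k = 0" if k: "k < n" "xs ! k dvd xs ! i" "k \<noteq> i" for k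
    proof (rule less.hyps[OF _ k(1)])
      have "xs ! k \<noteq> xs ! i" using k less.prems dist unfolding n_def by (simp add: nth_eq_iff_index_eq)
      with dvd_imp_le[OF k(2) x_pos[OF less.prems]] show "xs ! k < xs ! i" by simp
    qed
    ultimately show ?case using divisor_sum[OF less.prems] by simp
  qed
  then have "v = 0\<^sub>v n" using v(1) by (intro eq_vecI) auto
  with v(2) show False ..
qed

theorem theorem5p1:
  fixes xs :: "nat list" and S :: "nat set"
  assumes "distinct xs" and "set xs = S"
    and "0 \<notin> S"
    and "gcd_closed S"
    and "\<forall>x\<in>S. generates_double_chain S x"
  shows "inertia (lcm_matrix xs) =
           (card {x \<in> S. card (covered_by S x) \<noteq> 1},
            card {x \<in> S. card (covered_by S x) = 1},
            0)
       \<and> pos_inertia (lcm_matrix xs) = length xs - neg_inertia (lcm_matrix xs)"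
proof -
  have "finite S" and "0 \<notin> set xs" using assms(2,3) by auto
  note inertia = sylvester_law_of_inertia[OF divisor_mat_carrier
      det_divisor_mat_nonzero[OF assms(1) \<open>0 \<notin> set xs\<close>] lcm_matrix_factorization[OF assms(1-4)]]
  have count: "card {k. k < length xs \<and> P (psi S (xs ! k))} = card {x \<in> S. P (psi S x)}" for P
    using card_filter_nth_distinct[OF assms(1)] assms(2) by simp
  have sign: "psi S x < 0 \<longleftrightarrow> card (covered_by S x) = 1" "psi S x > 0 \<longleftrightarrow> card (covered_by S x) \<noteq> 1"
    if "x \<in> S" for x
    using psi_sign[OF \<open>finite S\<close> assms(3,4) that] assms(5) that by fastforce+
  then have no_zero: "{x \<in> S. psi S x = 0} = {}" by fastforce
  have "pos_inertia (lcm_matrix xs) = card {x \<in> S. card (covered_by S x) \<noteq> 1}"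
    using inertia(1) count[of "\<lambda>t. t > 0"] sign by (auto intro!: arg_cong[where f = card])
  moreover have "neg_inertia (lcm_matrix xs) = card {x \<in> S. card (covered_by S x) = 1}"
    using inertia(2) count[of "\<lambda>t. t < 0"] sign by (auto intro!: arg_cong[where f = card])
  moreover have "zero_inertia (lcm_matrix xs) = 0"
    using inertia(3) count[of "\<lambda>t. t = 0"] no_zero by simp
  moreover have "card {x \<in> S. card (covered_by S x) \<noteq> 1} + card {x \<in> S. card (covered_by S x) = 1} =
      card S"
    using \<open>finite S\<close> by (subst card_Un_disjoint[symmetric]) (auto intro: arg_cong[where f = card])
  moreover have "card S = length xs" using distinct_card[OF assms(1)] assms(2) by simp
  ultimately show ?thesis unfolding inertia_def by simp
qed

end
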